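(* If $G$ is a finite simple graph in which every unit sphere $S(x)$ belongs to $\mathcal{S}_2$ (a three-dimensional geometric graph without boundary), then $\chi(G)=0$.
   Context: For a vertex $x$, the unit sphere $S(x)$ is the subgraph induced by the neighbors of $x$. A graph is contractible if it is $K_1$, or, inductively, if there is a vertex $x$ such that both $S(x)$ and the subgraph induced by $V\setminus\{x\}$ are contractible. Let $\mathcal{G}_0$ be the class of graphs without edges, $\mathcal{S}_0$ those with exactly two vertices, $\mathcal{B}_0$ those with exactly one vertex. For $d\ge1$: $\mathcal{G}_d$ is the class of graphs in which every $S(x)$ lies in $\mathcal{S}_{d-1}\cup\mathcal{B}_{d-1}$, with boundary $\delta G$ induced by vertices $x$ with $S(x)\in\mathcal{B}_{d-1}$ and nonempty interior; $\mathcal{B}_d$ is the class of contractible graphs in $\mathcal{G}_d$ with boundary in $\mathcal{S}_{d-1}$; $\mathcal{S}_d$ is the class of non-contractible graphs in $\mathcal{G}_d$ such that removing any single vertex yields a graph in $\mathcal{B}_d$. The Euler characteristic is $\chi(G)=\sum_{k\ge0}(-1)^k v_k$, where $v_k$ is the number of complete subgraphs $K_{k+1}$ of $G$. *)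

theory Defs
  imports Main
begin

text \<open>A finite simple graph is represented by a vertex set V together with an
adjacency relation E (assumed symmetric and irreflexive on V).  All graphs
occurring in the definitions are induced subgraphs, so they are represented by
their vertex sets W, with adjacency E restricted to W.\<close>

definition unit_sphere :: "('a \<Rightarrow> 'a \<Rightarrow> bool) \<Rightarrow> 'a set \<Rightarrow> 'a \<Rightarrow> 'a set" where
  "unit_sphere E V x = {y \<in> V. E x y}"

inductive contractible :: "('a \<Rightarrow> 'a \<Rightarrow> bool) \<Rightarrow> 'a set \<Rightarrow> bool" for E where
  single: "contractible E {x}"
| step: "x \<in> V \<Longrightarrow> contractible E (unit_sphere E V x) \<Longrightarrow> contractible E (V - {x})
         \<Longrightarrow> contractible E V"

definition no_edges :: "('a \<Rightarrow> 'a \<Rightarrow> bool) \<Rightarrow> 'a set \<Rightarrow> bool" where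
  "no_edges E V \<longleftrightarrow> (\<forall>x\<in>V. \<forall>y\<in>V. \<not> E x y)"

definition boundary :: "('a set \<Rightarrow> bool) \<Rightarrow> ('a \<Rightarrow> 'a \<Rightarrow> bool) \<Rightarrow> 'a set \<Rightarrow> 'a set" where
  "boundary B E V = {x \<in> V. B (unit_sphere E V x)}"

text \<open>Membership in G_d given the classes S_{d-1} and B_{d-1}: every unit sphere
lies in S_{d-1} or B_{d-1}, and the interior (vertices not on the boundary) is nonempty.\<close>
definition geom_step :: "('a set \<Rightarrow> bool) \<Rightarrow> ('a set \<Rightarrow> bool) \<Rightarrow> ('a \<Rightarrow> 'a \<Rightarrow> bool) \<Rightarrow> 'a set \<Rightarrow> bool" where
  "geom_step S B E V \<longleftrightarrow>
     (\<forall>x\<in>V. S (unit_sphere E V x) \<or> B (unit_sphere E V x)) \<and> (\<exists>x\<in>V. \<not> B (unit_sphere E V x))"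

primrec SB_classes :: "nat \<Rightarrow> ('a \<Rightarrow> 'a \<Rightarrow> bool) \<Rightarrow> ('a set \<Rightarrow> bool) \<times> ('a set \<Rightarrow> bool)" where
  "SB_classes 0 E = ((\<lambda>V. no_edges E V \<and> card V = 2), (\<lambda>V. no_edges E V \<and> card V = 1))"
| "SB_classes (Suc d) E =
     (let S = fst (SB_classes d E); B = snd (SB_classes d E);
          Bn = (\<lambda>V. contractible E V \<and> geom_step S B E V \<and> S (boundary B E V))
      in ((\<lambda>V. \<not> contractible E V \<and> geom_step S B E V \<and> (\<forall>x\<in>V. Bn (V - {x}))), Bn))"

definition sphere_class :: "nat \<Rightarrow> ('a \<Rightarrow> 'a \<Rightarrow> bool) \<Rightarrow> 'a set \<Rightarrow> bool" where
  "sphere_class d E = fst (SB_classes d E)"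

definition ball_class :: "nat \<Rightarrow> ('a \<Rightarrow> 'a \<Rightarrow> bool) \<Rightarrow> 'a set \<Rightarrow> bool" where
  "ball_class d E = snd (SB_classes d E)"

definition is_clique :: "('a \<Rightarrow> 'a \<Rightarrow> bool) \<Rightarrow> 'a set \<Rightarrow> bool" where
  "is_clique E A \<longleftrightarrow> (\<forall>x\<in>A. \<forall>y\<in>A. x \<noteq> y \<longrightarrow> E x y)"

definition num_cliques :: "('a \<Rightarrow> 'a \<Rightarrow> bool) \<Rightarrow> 'a set \<Rightarrow> nat \<Rightarrow> nat" where
  "num_cliques E V k = card {A. A \<subseteq> V \<and> card A = k + 1 \<and> is_clique E A}"

definition euler_char :: "('a \<Rightarrow> 'a \<Rightarrow> bool) \<Rightarrow> 'a set \<Rightarrow> int" where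
  "euler_char E V = (\<Sum>k\<le>card V. (-1) ^ k * int (num_cliques E V k))"

end

theory Submission
  imports Defs
begin

text \<open>Removing a vertex x changes the Euler characteristic by 1 - chi(S(x)), because the
cliques through x are exactly the cones over the cliques of S(x). Hence contractible graphs
have chi = 1, and inductively d-spheres have chi = 1 + (-1)^d. Counting the cliques through
each vertex gives sum_x v_k(S(x)) = (k + 2) v_(k+1)(G). Applied to a 2-sphere, whose unit
spheres are cycles with v_0 = v_1, this yields 2 v_1 = 3 v_2. Applied to G, summing
v_0 - v_1 + v_2 = 2 and 2 v_1 - 3 v_2 = 0 over the unit spheres gives
2 v_1 - 3 v_2 + 4 v_3 = 2 v_0 and v_2 = 2 v_3, which force v_0 - v_1 + v_2 - v_3 = 0.\<close>

definition finite_simple_graph :: "('a \<Rightarrow> 'a \<Rightarrow> bool) \<Rightarrow> 'a set \<Rightarrow> bool" where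
  "finite_simple_graph E W \<longleftrightarrow>
     finite W \<and> (\<forall>x\<in>W. \<forall>y\<in>W. E x y \<longleftrightarrow> E y x) \<and> (\<forall>x\<in>W. \<not> E x x)"

definition simplices :: "('a \<Rightarrow> 'a \<Rightarrow> bool) \<Rightarrow> 'a set \<Rightarrow> nat \<Rightarrow> 'a set set" where
  "simplices E W k = {A. A \<subseteq> W \<and> card A = k + 1 \<and> is_clique E A}"

lemma num_cliques_eq_card_simplices: "num_cliques E W k = card (simplices E W k)"
  by (simp add: num_cliques_def simplices_def)

lemma finite_simple_graph_subset:
  "finite_simple_graph E W \<Longrightarrow> U \<subseteq> W \<Longrightarrow> finite_simple_graph E U"
  unfolding finite_simple_graph_def by (meson finite_subset subsetD)

lemma unit_sphere_subset: "unit_sphere E W x \<subseteq> W"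
  by (auto simp: unit_sphere_def)

lemma finite_simplices: "finite W \<Longrightarrow> finite (simplices E W k)"
  by (rule finite_subset[of _ "Pow W"]) (auto simp: simplices_def)

lemma num_cliques_0: "num_cliques E W 0 = card W"
proof -
  have "simplices E W 0 = (\<lambda>x. {x}) ` W"
    by (auto simp: simplices_def is_clique_def card_1_singleton_iff)
  then show ?thesis
    by (simp add: num_cliques_eq_card_simplices card_image)
qed

lemma num_cliques_eq_0: "finite W \<Longrightarrow> card W \<le> k \<Longrightarrow> num_cliques E W k = 0"
  by (auto simp: num_cliques_eq_card_simplices simplices_def dest: card_mono)

lemma num_cliques_no_edges:
  assumes "no_edges E W" "0 < k"
  shows "num_cliques E W k = 0"
proof -
  have "simplices E W k = {}"
  proof (rule ccontr)
    assume "simplices E W k \<noteq> {}"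
    then obtain A where A: "A \<subseteq> W" "card A = k + 1" "is_clique E A"
      by (auto simp: simplices_def)
    then have "\<forall>a\<in>A. \<forall>b\<in>A. a = b"
      using assms(1) unfolding is_clique_def no_edges_def by blast
    moreover have "finite A"
      using A(2) by (intro card_ge_0_finite) simp
    ultimately have "card A \<le> 1"
      by (simp add: card_le_Suc0_iff_eq)
    with A(2) assms(2) show False by simp
  qed
  then show ?thesis by (simp add: num_cliques_eq_card_simplices)
qed

lemma simplices_containing_vertex:
  assumes "finite_simple_graph E W" "x \<in> W"
  shows "{A \<in> simplices E W (Suc k). x \<in> A} = insert x ` simplices E (unit_sphere E W x) k"
proof
  have sym: "\<And>y. y \<in> W \<Longrightarrow> E x y \<Longrightarrow> E y x" and irrefl: "\<not> E x x"
    using assms by (auto simp: finite_simple_graph_def)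
  have finW: "finite W"
    using assms(1) by (simp add: finite_simple_graph_def)
  show "{A \<in> simplices E W (Suc k). x \<in> A} \<subseteq> insert x ` simplices E (unit_sphere E W x) k"
  proof
    fix A assume "A \<in> {A \<in> simplices E W (Suc k). x \<in> A}"
    then have "A - {x} \<in> simplices E (unit_sphere E W x) k" "x \<in> A"
      by (auto simp: simplices_def is_clique_def unit_sphere_def)
    then show "A \<in> insert x ` simplices E (unit_sphere E W x) k"
      by (metis image_eqI insert_Diff)
  qed
  show "insert x ` simplices E (unit_sphere E W x) k \<subseteq> {A \<in> simplices E W (Suc k). x \<in> A}"
  proof (rule image_subsetI)
    fix A assume "A \<in> simplices E (unit_sphere E W x) k"
    then have A: "A \<subseteq> W" "\<forall>y\<in>A. E x y" "card A = k + 1" "is_clique E A"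
      by (auto simp: simplices_def unit_sphere_def)
    then have "x \<notin> A" "finite A"
      using irrefl finW finite_subset by auto
    with A assms(2) sym show "insert x A \<in> {A \<in> simplices E W (Suc k). x \<in> A}"
      by (auto simp: simplices_def is_clique_def)
  qed
qed

lemma card_simplices_containing_vertex:
  assumes "finite_simple_graph E W" "x \<in> W"
  shows "card {A \<in> simplices E W (Suc k). x \<in> A} = num_cliques E (unit_sphere E W x) k"
proof -
  have "x \<notin> unit_sphere E W x"
    using assms by (auto simp: finite_simple_graph_def unit_sphere_def)
  then have "inj_on (insert x) (simplices E (unit_sphere E W x) k)"
    unfolding inj_on_def simplices_def by (auto simp: insert_ident)
  then show ?thesis
    by (simp add: simplices_containing_vertex[OF assms] card_image num_cliques_eq_card_simplices)
qed

lemma num_cliques_remove_vertex: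
  assumes "finite_simple_graph E W" "x \<in> W"
  shows "num_cliques E W (Suc k) =
    num_cliques E (W - {x}) (Suc k) + num_cliques E (unit_sphere E W x) k"
proof -
  let ?C = "simplices E W (Suc k)"
  have fin: "finite ?C"
    using assms(1) by (simp add: finite_simple_graph_def finite_simplices)
  have "card ?C = card ({A \<in> ?C. x \<notin> A} \<union> {A \<in> ?C. x \<in> A})"
    by (rule arg_cong[where f = card]) auto
  also have "\<dots> = card {A \<in> ?C. x \<notin> A} + card {A \<in> ?C. x \<in> A}"
    using fin by (intro card_Un_disjoint) auto
  also have "{A \<in> ?C. x \<notin> A} = simplices E (W - {x}) (Suc k)"
    by (auto simp: simplices_def)
  finally show ?thesis
    using card_simplices_containing_vertex[OF assms] by (simp add: num_cliques_eq_card_simplices)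
qed

lemma sum_num_cliques_unit_sphere:
  assumes "finite_simple_graph E W"
  shows "(\<Sum>x\<in>W. num_cliques E (unit_sphere E W x) k) = (k + 2) * num_cliques E W (Suc k)"
proof -
  have finW: "finite W"
    using assms by (simp add: finite_simple_graph_def)
  have "(\<Sum>x\<in>W. num_cliques E (unit_sphere E W x) k) =
      (\<Sum>x\<in>W. card {A \<in> simplices E W (Suc k). x \<in> A})"
    by (simp add: card_simplices_containing_vertex[OF assms])
  also have "\<dots> = (k + 2) * card (simplices E W (Suc k))"
  proof (rule sum_multicount[OF finW finite_simplices[OF finW]], intro ballI)
    fix A assume "A \<in> simplices E W (Suc k)"
    then have "{x \<in> W. x \<in> A} = A" "card A = k + 2"
      by (auto simp: simplices_def)
    then show "card {x \<in> W. x \<in> A} = k + 2" by simp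
  qed
  finally show ?thesis
    by (simp add: num_cliques_eq_card_simplices)
qed

lemma num_cliques_Suc_eq_0:
  assumes "finite_simple_graph E W" "\<forall>x\<in>W. num_cliques E (unit_sphere E W x) k = 0"
  shows "num_cliques E W (Suc k) = 0"
  using sum_num_cliques_unit_sphere[OF assms(1), of k] assms(2) by simp

lemma euler_char_eq_sum:
  assumes "finite W" "\<forall>k\<ge>n. num_cliques E W k = 0"
  shows "euler_char E W = (\<Sum>k<n. (-1) ^ k * int (num_cliques E W k))"
proof -
  let ?f = "\<lambda>k. (-1) ^ k * int (num_cliques E W k)"
  have vanish: "\<forall>k\<ge>n. ?f k = 0" "\<forall>k\<ge>Suc (card W). ?f k = 0"
    using assms num_cliques_eq_0[OF assms(1)] by auto
  have "euler_char E W = sum ?f {..<Suc (card W)}"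
    by (simp add: euler_char_def lessThan_Suc_atMost)
  also have "\<dots> = sum ?f {..<max n (Suc (card W))}"
    by (rule sum.mono_neutral_left) (use vanish in auto)
  also have "\<dots> = sum ?f {..<n}"
    by (rule sum.mono_neutral_right) (use vanish in auto)
  finally show ?thesis .
qed

lemma euler_char_remove_vertex:
  assumes "finite_simple_graph E W" "x \<in> W"
  shows "euler_char E W = euler_char E (W - {x}) + 1 - euler_char E (unit_sphere E W x)"
proof -
  define n where "n = card W"
  define S where "S = unit_sphere E W x"
  have finW: "finite W"
    using assms(1) by (simp add: finite_simple_graph_def)
  have cards: "card (W - {x}) \<le> n" "card S \<le> n"
    unfolding n_def S_def using card_Diff1_le card_mono[OF finW unit_sphere_subset] by auto
  let ?\<chi> = "\<lambda>U m. \<Sum>k<m. (-1) ^ k * int (num_cliques E U k)"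
  have \<chi>_eq: "euler_char E U = ?\<chi> U m" if "U \<subseteq> W" "card U \<le> m" for U m
    using that finite_subset[OF _ finW] by (intro euler_char_eq_sum) (auto intro!: num_cliques_eq_0)
  have vertices: "int (num_cliques E W 0) = int (num_cliques E (W - {x}) 0) + 1"
  proof -
    have "0 < card W"
      using finW assms(2) card_gt_0_iff by blast
    then show ?thesis
      using finW assms(2) by (simp add: num_cliques_0)
  qed
  have split: "(-1) ^ Suc k * int (num_cliques E W (Suc k)) =
      (-1) ^ Suc k * int (num_cliques E (W - {x}) (Suc k)) - (-1) ^ k * int (num_cliques E S k)"
    for k
    by (simp add: num_cliques_remove_vertex[OF assms] S_def algebra_simps)
  have "euler_char E W = ?\<chi> W (Suc n)"
    by (rule \<chi>_eq) (auto simp: n_def)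
  also have "\<dots> = int (num_cliques E W 0) + (\<Sum>k<n. (-1) ^ Suc k * int (num_cliques E W (Suc k)))"
    by (simp add: sum.lessThan_Suc_shift del: sum.lessThan_Suc power_Suc)
  also have "\<dots> = int (num_cliques E (W - {x}) 0) + 1
      + (\<Sum>k<n. (-1) ^ Suc k * int (num_cliques E (W - {x}) (Suc k))) - ?\<chi> S n"
    unfolding vertices split sum_subtractf by simp
  also have "\<dots> = ?\<chi> (W - {x}) (Suc n) + 1 - ?\<chi> S n"
    by (simp add: sum.lessThan_Suc_shift del: sum.lessThan_Suc power_Suc)
  also have "\<dots> = euler_char E (W - {x}) + 1 - euler_char E S"
    using \<chi>_eq[of "W - {x}" "Suc n"] \<chi>_eq[of S n] cards
    by (simp add: S_def unit_sphere_subset del: sum.lessThan_Suc)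
  finally show ?thesis by (simp add: S_def)
qed

lemma euler_char_singleton: "euler_char E {x} = 1"
  by (simp add: euler_char_def num_cliques_0 num_cliques_eq_0)

lemma euler_char_contractible:
  "contractible E W \<Longrightarrow> finite_simple_graph E W \<Longrightarrow> euler_char E W = 1"
proof (induction rule: contractible.induct)
  case (single x)
  show ?case by (rule euler_char_singleton)
next
  case (step x W)
  then show ?case
    using euler_char_remove_vertex[OF step.prems step.hyps(1)]
    by (simp add: finite_simple_graph_subset unit_sphere_subset)
qed

lemma sphere_class_Suc:
  "sphere_class (Suc d) E W \<longleftrightarrow> \<not> contractible E W
     \<and> geom_step (sphere_class d E) (ball_class d E) E W \<and> (\<forall>x\<in>W. ball_class (Suc d) E (W - {x}))"
  by (simp add: sphere_class_def ball_class_def Let_def)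

lemma ball_class_contractible: "ball_class d E W \<Longrightarrow> contractible E W"
proof (cases d)
  case 0
  assume "ball_class d E W"
  then have "card W = 1"
    using 0 by (simp add: ball_class_def)
  then obtain w where "W = {w}"
    by (rule card_1_singletonE)
  then show ?thesis by (simp add: contractible.single)
qed (simp add: ball_class_def Let_def)

lemma sphere_class_unit_sphere:
  assumes "sphere_class (Suc d) E W" "x \<in> W"
  shows "sphere_class d E (unit_sphere E W x)"
proof -
  have "\<not> contractible E W" "ball_class (Suc d) E (W - {x})"
    and "sphere_class d E (unit_sphere E W x) \<or> ball_class d E (unit_sphere E W x)"
    using assms unfolding sphere_class_Suc geom_step_def by blast+
  then show ?thesis
    using contractible.step[OF assms(2)] ball_class_contractible by blast
qed

lemma sphere_class_Suc_nonempty: "sphere_class (Suc d) E W \<Longrightarrow> W \<noteq> {}"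
  unfolding sphere_class_Suc geom_step_def by blast

lemma num_cliques_sphere_class:
  "sphere_class d E W \<Longrightarrow> finite_simple_graph E W \<Longrightarrow> d < k \<Longrightarrow> num_cliques E W k = 0"
proof (induction d arbitrary: W k)
  case 0
  then show ?case by (simp add: sphere_class_def num_cliques_no_edges)
next
  case (Suc d)
  then obtain j where "k = Suc j" "d < j"
    by (metis Suc_lessE)
  with Suc show ?case
    by (auto intro!: num_cliques_Suc_eq_0 Suc.IH sphere_class_unit_sphere
        finite_simple_graph_subset[OF _ unit_sphere_subset])
qed

lemma num_cliques_unit_spheres_sphere_class:
  assumes "finite_simple_graph E W" "\<forall>x\<in>W. sphere_class d E (unit_sphere E W x)" "Suc d < k"
  shows "num_cliques E W k = 0"
proof -
  obtain j where "k = Suc j" "d < j"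
    using assms(3) by (cases k) auto
  then show ?thesis
    using assms(1,2) finite_simple_graph_subset[OF assms(1) unit_sphere_subset]
    by (auto intro!: num_cliques_Suc_eq_0 num_cliques_sphere_class)
qed

lemma euler_char_sphere_class:
  "sphere_class d E W \<Longrightarrow> finite_simple_graph E W \<Longrightarrow> euler_char E W = 1 + (-1) ^ d"
proof (induction d arbitrary: W)
  case 0
  then have "euler_char E W = (\<Sum>k<1. (-1) ^ k * int (num_cliques E W k))"
    by (intro euler_char_eq_sum) (auto simp: finite_simple_graph_def intro: num_cliques_sphere_class)
  with 0 show ?case by (simp add: num_cliques_0 sphere_class_def)
next
  case (Suc d)
  then obtain x where x: "x \<in> W"
    using sphere_class_Suc_nonempty by blast
  have "euler_char E (W - {x}) = 1"
    using Suc.prems x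
    by (auto simp: sphere_class_Suc intro!: euler_char_contractible ball_class_contractible
        elim: finite_simple_graph_subset)
  moreover have "euler_char E (unit_sphere E W x) = 1 + (-1) ^ d"
    using Suc x by (auto intro!: Suc.IH sphere_class_unit_sphere
        finite_simple_graph_subset[OF _ unit_sphere_subset])
  ultimately show ?case
    using euler_char_remove_vertex[OF Suc.prems(2) x] by simp
qed

lemma num_cliques_sphere_class_1:
  assumes "sphere_class 1 E W" "finite_simple_graph E W"
  shows "num_cliques E W 0 = num_cliques E W 1"
proof -
  have "euler_char E W = (\<Sum>k<2. (-1) ^ k * int (num_cliques E W k))"
    using assms num_cliques_sphere_class[OF assms]
    by (intro euler_char_eq_sum) (auto simp: finite_simple_graph_def)
  with euler_char_sphere_class[OF assms] show ?thesis
    by (simp add: eval_nat_numeral)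
qed

lemma euler_formula_sphere_class_2:
  assumes "sphere_class 2 E W" "finite_simple_graph E W"
  shows "int (num_cliques E W 0) - int (num_cliques E W 1) + int (num_cliques E W 2) = 2"
proof -
  have "euler_char E W = (\<Sum>k<3. (-1) ^ k * int (num_cliques E W k))"
    using assms num_cliques_sphere_class[OF assms]
    by (intro euler_char_eq_sum) (auto simp: finite_simple_graph_def)
  with euler_char_sphere_class[OF assms] show ?thesis
    by (simp add: eval_nat_numeral)
qed

lemma dehn_sommerville_sphere_class_2:
  assumes "sphere_class 2 E W" "finite_simple_graph E W"
  shows "2 * num_cliques E W 1 = 3 * num_cliques E W 2"
proof -
  have "num_cliques E (unit_sphere E W x) 0 = num_cliques E (unit_sphere E W x) 1" if "x \<in> W" for x
    using assms that
    by (intro num_cliques_sphere_class_1 sphere_class_unit_sphere)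
      (auto simp: numeral_2_eq_2 intro: finite_simple_graph_subset[OF _ unit_sphere_subset])
  then have "(\<Sum>x\<in>W. num_cliques E (unit_sphere E W x) 0) =
      (\<Sum>x\<in>W. num_cliques E (unit_sphere E W x) 1)"
    by simp
  then show ?thesis
    using sum_num_cliques_unit_sphere[OF assms(2), of 0] sum_num_cliques_unit_sphere[OF assms(2), of 1]
    by (simp add: eval_nat_numeral)
qed

theorem mainTheorem5:
  fixes E :: "'a \<Rightarrow> 'a \<Rightarrow> bool" and V :: "'a set"
  assumes "finite V"
    and "\<forall>x\<in>V. \<forall>y\<in>V. E x y \<longleftrightarrow> E y x"
    and "\<forall>x\<in>V. \<not> E x x"
    and "\<forall>x\<in>V. sphere_class 2 E (unit_sphere E V x)"
  shows "euler_char E V = 0"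
proof -
  let ?S = "unit_sphere E V" and ?v = "\<lambda>U k. int (num_cliques E U k)"
  have G: "finite_simple_graph E V"
    using assms(1-3) by (simp add: finite_simple_graph_def)
  have S: "sphere_class 2 E (?S x)" "finite_simple_graph E (?S x)" if "x \<in> V" for x
    using assms(4) that finite_simple_graph_subset[OF G unit_sphere_subset] by auto
  have handshake: "(\<Sum>x\<in>V. ?v (?S x) k) = int (k + 2) * ?v V (k + 1)" for k
    using sum_num_cliques_unit_sphere[OF G, of k] by (metis Suc_eq_plus1 of_nat_mult of_nat_sum)
  have "\<forall>k\<ge>4. num_cliques E V k = 0"
    using num_cliques_unit_spheres_sphere_class[OF G assms(4)] by simp
  then have euler: "euler_char E V = ?v V 0 - ?v V 1 + ?v V 2 - ?v V 3"
    using euler_char_eq_sum[OF assms(1)] by (simp add: eval_nat_numeral)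
  have "?v (?S x) 0 - ?v (?S x) 1 + ?v (?S x) 2 = 2" if "x \<in> V" for x
    using euler_formula_sphere_class_2 S[OF that] by blast
  then have "(\<Sum>x\<in>V. ?v (?S x) 0 - ?v (?S x) 1 + ?v (?S x) 2) = 2 * ?v V 0"
    by (simp add: num_cliques_0)
  then have relation1: "2 * ?v V 1 - 3 * ?v V 2 + 4 * ?v V 3 = 2 * ?v V 0"
    using handshake[of 0] handshake[of 1] handshake[of 2]
    by (simp add: sum.distrib sum_subtractf eval_nat_numeral)
  have "2 * ?v (?S x) 1 = 3 * ?v (?S x) 2" if "x \<in> V" for x
    using dehn_sommerville_sphere_class_2[OF S[OF that]] by linarith
  then have "(\<Sum>x\<in>V. 2 * ?v (?S x) 1 - 3 * ?v (?S x) 2) = 0"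
    by simp
  then have relation2: "2 * (3 * ?v V 2) - 3 * (4 * ?v V 3) = 0"
    using handshake[of 1] handshake[of 2]
    by (simp add: sum_subtractf eval_nat_numeral flip: sum_distrib_left)
  from euler relation1 relation2 show ?thesis
    by linarith
qed

end
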